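(* For every $\epsilon>0$ there is $\epsilon'>0$ depending only on $\epsilon$ such that: if $f:\{0,1\}^n\to\{-1,1\}$ and $B$ is a symmetric $n\times n$ matrix over $\mathbb F_2$ with zero diagonal satisfying $\mathbb E_y\hat{f_y}^2(By)\ge\epsilon$, then there exists a quadratic polynomial function $g$ whose distance from $f$ is at most $\frac12-\epsilon'$.
   Context: $\{0,1\}^n$ is identified with $\mathbb F_2^n$. $\hat h(\alpha)=\mathbb E_z h(z)(-1)^{\langle\alpha,z\rangle}$; $f_y(x)=f(x)f(x+y)$; $y$ uniform. A quadratic polynomial function is $g=(-1)^{P}$ with $P$ an $n$-variate polynomial over $\mathbb F_2$ of degree at most $2$. Distance is the fraction of points where two functions differ. *)

theory Defs
  imports Main "HOL-Library.Function_Algebras" Complex_Main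
begin

text \<open>Points of F_2^n are encoded as subsets of {..<n} (indicator of the support).
  Addition is symmetric difference; the inner product <a,z> is the parity of card (a \<inter> z).\<close>

definition cube :: "nat \<Rightarrow> nat set set" where
  "cube n = Pow {..<n}"

definition vadd :: "nat set \<Rightarrow> nat set \<Rightarrow> nat set" where
  "vadd x y = (x - y) \<union> (y - x)"

definition chr :: "nat set \<Rightarrow> nat set \<Rightarrow> real" where
  "chr a z = (-1) ^ card (a \<inter> z)"

definition expect :: "nat \<Rightarrow> (nat set \<Rightarrow> real) \<Rightarrow> real" where
  "expect n h = (\<Sum>z\<in>cube n. h z) / 2 ^ n"

definition fourier :: "nat \<Rightarrow> (nat set \<Rightarrow> real) \<Rightarrow> nat set \<Rightarrow> real" where
  "fourier n h \<alpha> = expect n (\<lambda>z. h z * chr \<alpha> z)"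

definition deriv_fun :: "(nat set \<Rightarrow> real) \<Rightarrow> nat set \<Rightarrow> nat set \<Rightarrow> real" where
  "deriv_fun f y = (\<lambda>x. f x * f (vadd x y))"

text \<open>An n x n matrix over F_2 is a function B :: nat => nat => bool (entries for i,j < n).
  Matrix-vector product: (By)_i = sum_j B_ij y_j.\<close>
definition matvec :: "nat \<Rightarrow> (nat \<Rightarrow> nat \<Rightarrow> bool) \<Rightarrow> nat set \<Rightarrow> nat set" where
  "matvec n B y = {i. i < n \<and> odd (card {j \<in> y. j < n \<and> B i j})}"

text \<open>Polynomial of degree at most 2 over F_2 in n variables: by x_i^2 = x_i, its
  general form is  c + sum_i a_i x_i + sum_{i<j} q_ij x_i x_j.  Its value at x:\<close>
definition quad_poly_eval :: "nat \<Rightarrow> bool \<Rightarrow> (nat \<Rightarrow> bool) \<Rightarrow> (nat \<Rightarrow> nat \<Rightarrow> bool) \<Rightarrow> nat set \<Rightarrow> bool" where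
  "quad_poly_eval n c a q x =
     (c \<noteq> odd (card {i \<in> x. i < n \<and> a i} +
                card {(i, j). i \<in> x \<and> j \<in> x \<and> i < j \<and> j < n \<and> q i j}))"

definition quadratic_poly_fun :: "nat \<Rightarrow> (nat set \<Rightarrow> real) \<Rightarrow> bool" where
  "quadratic_poly_fun n g \<longleftrightarrow>
     (\<exists>c a q. \<forall>x\<in>cube n. g x = (if quad_poly_eval n c a q x then -1 else 1))"

definition dist_cube :: "nat \<Rightarrow> (nat set \<Rightarrow> real) \<Rightarrow> (nat set \<Rightarrow> real) \<Rightarrow> real" where
  "dist_cube n f g = real (card {x \<in> cube n. f x \<noteq> g x}) / 2 ^ n"

end

theory Submission
  imports Defs
begin

text \<open>Let Q(x) = (-1)^(sum over i < j of B_ij x_i x_j). Because B is symmetric with zero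
  diagonal, Q(x + y) = Q(x) Q(y) (-1)^<By,x>, so with h = f Q the coefficient of f_y at By is
  Q(y) times the autocorrelation E_x h(x) h(x + y). By Parseval, the hypothesis then says that the
  Fourier coefficients of h have fourth moment at least \<epsilon>; as their squares sum to 1, some
  coefficient has |h^(\<alpha>)| \<ge> \<epsilon>. The quadratic phase g = \<plusminus>(-1)^<\<alpha>,x> Q(x) has correlation
  |h^(\<alpha>)| with f, i.e. distance (1 - |h^(\<alpha>)|)/2.\<close>

definition bool_sign :: "bool \<Rightarrow> real" where
  "bool_sign b = (if b then -1 else 1)"

lemma bool_sign_xor: "bool_sign (a \<noteq> b) = bool_sign a * bool_sign b"
  by (auto simp: bool_sign_def)

lemma bool_sign_odd: "bool_sign (odd k) = (-1) ^ k"
  by (simp add: bool_sign_def minus_one_power_iff)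

lemma neg_one_power_card_filter:
  assumes "finite A"
  shows "(-1::real) ^ card {p\<in>A. P p} = (\<Prod>p\<in>A. bool_sign (P p))"
proof -
  have "(-1::real) ^ card {p\<in>A. P p} = (\<Prod>p\<in>{p\<in>A. P p}. -1)" by simp
  also have "\<dots> = (\<Prod>p\<in>A. if P p then -1 else 1)" by (rule prod.inter_filter[OF assms])
  finally show ?thesis by (simp add: bool_sign_def)
qed

lemma finite_cube: "finite (cube n)"
  by (simp add: cube_def)

lemma card_cube: "card (cube n) = 2 ^ n"
  by (simp add: cube_def card_Pow)

lemma cube_subset: "x \<in> cube n \<Longrightarrow> x \<subseteq> {..<n}"
  by (simp add: cube_def)

lemma finite_cube_elem: "x \<in> cube n \<Longrightarrow> finite x"
  using cube_subset finite_subset by blast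

lemma vadd_in_cube: "x \<in> cube n \<Longrightarrow> y \<in> cube n \<Longrightarrow> vadd x y \<in> cube n"
  by (auto simp: cube_def vadd_def)

lemma vadd_vadd_cancel: "vadd x (vadd x y) = y"
  by (auto simp: vadd_def)

lemma vadd_eq_empty_iff: "vadd x y = {} \<longleftrightarrow> x = y"
  by (auto simp: vadd_def)

lemma sum_cube_translate:
  "x \<in> cube n \<Longrightarrow> (\<Sum>y\<in>cube n. \<phi> (vadd x y)) = (\<Sum>y\<in>cube n. \<phi> y)"
  by (rule sum.reindex_bij_witness[where i="vadd x" and j="vadd x"])
     (auto simp: vadd_vadd_cancel vadd_in_cube)

lemma chr_eq_prod: "finite a \<Longrightarrow> chr a z = (\<Prod>i\<in>a. bool_sign (i \<in> z))"
  unfolding chr_def by (metis Int_def neg_one_power_card_filter)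

lemma chr_vadd: "finite a \<Longrightarrow> chr a (vadd x z) = chr a x * chr a z"
  unfolding chr_eq_prod prod.distrib[symmetric]
  by (intro prod.cong) (auto simp: bool_sign_def vadd_def)

lemma sum_chr_cube:
  assumes "z \<in> cube n"
  shows "(\<Sum>\<alpha>\<in>cube n. chr \<alpha> z) = (if z = {} then 2 ^ n else 0)"
proof -
  have "(\<Prod>i<n. bool_sign (i \<in> z) + 1) = (\<Sum>\<alpha>\<in>cube n. chr \<alpha> z)"
    unfolding prod_add[OF finite_lessThan] cube_def
    by (intro sum.cong) (auto simp: chr_eq_prod finite_subset)
  moreover have "(\<Prod>i<n. bool_sign (i \<in> z) + 1) = (if z = {} then 2 ^ n else 0)"
  proof (cases "z = {}")
    case False
    then obtain i where "i \<in> z" "i < n" using cube_subset[OF assms] by blast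
    then have "bool_sign (i \<in> z) + 1 = 0" by (simp add: bool_sign_def)
    then have "(\<Prod>i<n. bool_sign (i \<in> z) + 1) = 0"
      using \<open>i < n\<close> by (intro prod_zero) auto
    then show ?thesis using False by simp
  qed (simp add: bool_sign_def)
  ultimately show ?thesis by simp
qed

lemma parseval_sum:
  "(\<Sum>\<alpha>\<in>cube n. (\<Sum>x\<in>cube n. \<phi> x * chr \<alpha> x)^2) = 2^n * (\<Sum>x\<in>cube n. (\<phi> x)^2)"
proof -
  have square: "(\<Sum>x\<in>cube n. \<phi> x * chr \<alpha> x)^2
      = (\<Sum>x\<in>cube n. \<Sum>z\<in>cube n. \<phi> x * \<phi> z * chr \<alpha> (vadd x z))" if "\<alpha> \<in> cube n" for \<alpha>
    unfolding power2_eq_square sum_product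
    using chr_vadd[OF finite_cube_elem[OF that]] by (simp add: mult_ac)
  have "(\<Sum>\<alpha>\<in>cube n. (\<Sum>x\<in>cube n. \<phi> x * chr \<alpha> x)^2)
      = (\<Sum>\<alpha>\<in>cube n. \<Sum>x\<in>cube n. \<Sum>z\<in>cube n. \<phi> x * \<phi> z * chr \<alpha> (vadd x z))"
    by (intro sum.cong) (simp_all add: square)
  also have "\<dots> = (\<Sum>x\<in>cube n. \<Sum>z\<in>cube n. \<Sum>\<alpha>\<in>cube n. \<phi> x * \<phi> z * chr \<alpha> (vadd x z))"
    by (subst sum.swap, rule sum.cong[OF refl], rule sum.swap)
  also have "\<dots> = (\<Sum>x\<in>cube n. \<Sum>z\<in>cube n. \<phi> x * \<phi> z * (\<Sum>\<alpha>\<in>cube n. chr \<alpha> (vadd x z)))"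
    by (simp add: sum_distrib_left)
  also have "\<dots> = (\<Sum>x\<in>cube n. \<Sum>z\<in>cube n. if x = z then \<phi> x * \<phi> x * 2^n else 0)"
    by (intro sum.cong) (simp_all add: sum_chr_cube vadd_in_cube vadd_eq_empty_iff)
  also have "\<dots> = 2^n * (\<Sum>x\<in>cube n. (\<phi> x)^2)"
    by (simp add: finite_cube sum_distrib_left power2_eq_square mult_ac)
  finally show ?thesis .
qed

lemma fourier_parseval: "(\<Sum>\<alpha>\<in>cube n. (fourier n \<phi> \<alpha>)^2) = expect n (\<lambda>x. (\<phi> x)^2)"
proof -
  have "(\<Sum>\<alpha>\<in>cube n. (fourier n \<phi> \<alpha>)^2)
      = (\<Sum>\<alpha>\<in>cube n. (\<Sum>x\<in>cube n. \<phi> x * chr \<alpha> x)^2) / (2^n)^2"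
    by (simp add: fourier_def expect_def power_divide sum_divide_distrib[symmetric])
  also have "\<dots> = expect n (\<lambda>x. (\<phi> x)^2)"
    unfolding parseval_sum expect_def by (simp add: power2_eq_square)
  finally show ?thesis .
qed

lemma fourier_translate:
  assumes "x \<in> cube n" "\<alpha> \<in> cube n"
  shows "fourier n (\<lambda>y. h (vadd x y)) \<alpha> = chr \<alpha> x * fourier n h \<alpha>"
proof -
  have "(\<Sum>y\<in>cube n. h (vadd x y) * chr \<alpha> y)
      = (\<Sum>y\<in>cube n. h (vadd x (vadd x y)) * chr \<alpha> (vadd x y))"
    using sum_cube_translate[OF assms(1), of "\<lambda>y. h (vadd x y) * chr \<alpha> y"] by simp
  also have "\<dots> = chr \<alpha> x * (\<Sum>y\<in>cube n. h y * chr \<alpha> y)"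
    by (simp add: vadd_vadd_cancel chr_vadd[OF finite_cube_elem[OF assms(2)]] sum_distrib_left mult_ac)
  finally show ?thesis by (simp add: fourier_def expect_def)
qed

definition autocorrelation :: "nat \<Rightarrow> (nat set \<Rightarrow> real) \<Rightarrow> nat set \<Rightarrow> real" where
  "autocorrelation n h y = expect n (\<lambda>x. h x * h (vadd x y))"

lemma fourier_autocorrelation:
  assumes "\<alpha> \<in> cube n"
  shows "fourier n (autocorrelation n h) \<alpha> = (fourier n h \<alpha>)^2"
proof -
  have "(\<Sum>y\<in>cube n. (\<Sum>x\<in>cube n. h x * h (vadd x y)) / 2^n * chr \<alpha> y)
      = (\<Sum>y\<in>cube n. \<Sum>x\<in>cube n. h x * (h (vadd x y) * chr \<alpha> y) / 2^n)"
    by (simp add: sum_distrib_left sum_distrib_right sum_divide_distrib mult_ac)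
  also have "\<dots> = (\<Sum>x\<in>cube n. \<Sum>y\<in>cube n. h x * (h (vadd x y) * chr \<alpha> y) / 2^n)"
    by (rule sum.swap)
  finally have "fourier n (autocorrelation n h) \<alpha> = expect n (\<lambda>x. h x * fourier n (\<lambda>y. h (vadd x y)) \<alpha>)"
    by (simp add: fourier_def expect_def autocorrelation_def sum_distrib_left sum_divide_distrib)
  also have "\<dots> = expect n (\<lambda>x. h x * chr \<alpha> x * fourier n h \<alpha>)"
    unfolding expect_def by (intro arg_cong[where f="\<lambda>s. s / _"] sum.cong) (simp_all add: fourier_translate assms)
  also have "\<dots> = (fourier n h \<alpha>)^2"
    by (simp add: fourier_def expect_def sum_divide_distrib[symmetric] sum_distrib_right[symmetric] power2_eq_square)
  finally show ?thesis .
qed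

definition quad_phase :: "nat \<Rightarrow> (nat \<Rightarrow> nat \<Rightarrow> bool) \<Rightarrow> nat set \<Rightarrow> real" where
  "quad_phase n B x = (-1) ^ card {(i, j). i \<in> x \<and> j \<in> x \<and> i < j \<and> j < n \<and> B i j}"

lemma quad_phase_square: "(quad_phase n B x)^2 = 1"
  by (simp add: quad_phase_def flip: power_mult)

lemma quad_phase_eq_prod:
  "quad_phase n B x = (\<Prod>(i, j)\<in>{..<n} \<times> {..<n}. bool_sign (i \<in> x \<and> j \<in> x \<and> i < j \<and> B i j))"
proof -
  have "{(i, j). i \<in> x \<and> j \<in> x \<and> i < j \<and> j < n \<and> B i j}
      = {p \<in> {..<n} \<times> {..<n}. case p of (i, j) \<Rightarrow> i \<in> x \<and> j \<in> x \<and> i < j \<and> B i j}"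
    by auto
  then show ?thesis
    unfolding quad_phase_def by (simp add: neg_one_power_card_filter case_prod_unfold)
qed

lemma chr_matvec_eq_prod:
  "chr (matvec n B y) x = (\<Prod>(i, j)\<in>{..<n} \<times> {..<n}. bool_sign (i \<in> x \<and> j \<in> y \<and> B i j))"
proof -
  have row: "bool_sign (i \<in> x \<and> i \<in> matvec n B y) = (\<Prod>j<n. bool_sign (i \<in> x \<and> j \<in> y \<and> B i j))"
    if "i < n" for i
  proof -
    have "(\<Prod>j<n. bool_sign (j \<in> y \<and> B i j)) = (-1) ^ card {j \<in> {..<n}. j \<in> y \<and> B i j}"
      by (rule neg_one_power_card_filter[symmetric]) simp
    also have "{j \<in> {..<n}. j \<in> y \<and> B i j} = {j \<in> y. j < n \<and> B i j}" by auto
    finally have "bool_sign (i \<in> matvec n B y) = (\<Prod>j<n. bool_sign (j \<in> y \<and> B i j))"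
      using that by (simp add: matvec_def bool_sign_def minus_one_power_iff)
    then show ?thesis by (cases "i \<in> x") (simp_all add: bool_sign_def)
  qed
  have support: "matvec n B y \<inter> x = {i \<in> {..<n}. i \<in> x \<and> i \<in> matvec n B y}"
    by (auto simp: matvec_def)
  have "chr (matvec n B y) x = (\<Prod>i<n. bool_sign (i \<in> x \<and> i \<in> matvec n B y))"
    unfolding chr_def support by (rule neg_one_power_card_filter) simp
  also have "\<dots> = (\<Prod>i<n. \<Prod>j<n. bool_sign (i \<in> x \<and> j \<in> y \<and> B i j))"
    by (intro prod.cong) (simp_all add: row)
  finally show ?thesis by (simp add: prod.cartesian_product)
qed

lemma chr_matvec_triangles:
  assumes sym: "\<forall>i<n. \<forall>j<n. B i j = B j i" and diag: "\<forall>i<n. \<not> B i i"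
  shows "chr (matvec n B y) x = (\<Prod>(i, j)\<in>{..<n} \<times> {..<n}.
           bool_sign (i \<in> x \<and> j \<in> y \<and> i < j \<and> B i j) * bool_sign (i \<in> y \<and> j \<in> x \<and> i < j \<and> B i j))"
proof -
  let ?U = "{..<n} \<times> {..<n}"
  have "bool_sign (i \<in> x \<and> j \<in> y \<and> B i j)
      = bool_sign (i \<in> x \<and> j \<in> y \<and> i < j \<and> B i j) * bool_sign (i \<in> x \<and> j \<in> y \<and> j < i \<and> B i j)"
    if "(i, j) \<in> ?U" for i j
    using diag that by (cases i j rule: linorder_cases) (auto simp: bool_sign_def)
  then have "chr (matvec n B y) x
      = (\<Prod>(i, j)\<in>?U. bool_sign (i \<in> x \<and> j \<in> y \<and> i < j \<and> B i j))
        * (\<Prod>(i, j)\<in>?U. bool_sign (i \<in> x \<and> j \<in> y \<and> j < i \<and> B i j))"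
    unfolding chr_matvec_eq_prod prod.distrib[symmetric] by (intro prod.cong) auto
  also have "(\<Prod>(i, j)\<in>?U. bool_sign (i \<in> x \<and> j \<in> y \<and> j < i \<and> B i j))
      = (\<Prod>(i, j)\<in>?U. bool_sign (i \<in> y \<and> j \<in> x \<and> i < j \<and> B i j))"
    by (rule prod.reindex_bij_witness[where i="\<lambda>(a, b). (b, a)" and j="\<lambda>(a, b). (b, a)"])
       (use sym in \<open>auto simp: conj_commute conj_left_commute\<close>)
  finally show ?thesis
    by (simp add: prod.distrib case_prod_unfold)
qed

lemma quad_phase_vadd:
  assumes "\<forall>i<n. \<forall>j<n. B i j = B j i" and "\<forall>i<n. \<not> B i i"
  shows "quad_phase n B (vadd x y) = quad_phase n B x * quad_phase n B y * chr (matvec n B y) x"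
proof -
  \<comment> \<open>over F_2, (x+y)_i (x+y)_j = x_i x_j + y_i y_j + x_i y_j + y_i x_j\<close>
  have "bool_sign (i \<in> vadd x y \<and> j \<in> vadd x y \<and> i < j \<and> B i j) =
      bool_sign (i \<in> x \<and> j \<in> x \<and> i < j \<and> B i j) * bool_sign (i \<in> y \<and> j \<in> y \<and> i < j \<and> B i j) *
      (bool_sign (i \<in> x \<and> j \<in> y \<and> i < j \<and> B i j) * bool_sign (i \<in> y \<and> j \<in> x \<and> i < j \<and> B i j))"
    for i j
    by (auto simp: bool_sign_def vadd_def)
  then show ?thesis
    unfolding quad_phase_eq_prod chr_matvec_triangles[OF assms]
    by (simp add: prod.distrib case_prod_unfold)
qed

lemma fourier_deriv_fun_matvec:
  assumes "\<forall>i<n. \<forall>j<n. B i j = B j i" and "\<forall>i<n. \<not> B i i"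
  shows "fourier n (deriv_fun f y) (matvec n B y)
       = quad_phase n B y * autocorrelation n (\<lambda>x. f x * quad_phase n B x) y"
proof -
  have pointwise: "f x * f (vadd x y) * chr (matvec n B y) x
      = quad_phase n B y * (f x * quad_phase n B x * (f (vadd x y) * quad_phase n B (vadd x y)))" for x
  proof -
    have "f x * f (vadd x y) * chr (matvec n B y) x
        = f x * f (vadd x y) * chr (matvec n B y) x * (quad_phase n B x)^2 * (quad_phase n B y)^2"
      by (simp add: quad_phase_square)
    also have "\<dots> = quad_phase n B y * (f x * quad_phase n B x * (f (vadd x y) * quad_phase n B (vadd x y)))"
      by (simp add: quad_phase_vadd[OF assms] power2_eq_square mult_ac)
    finally show ?thesis .
  qed
  show ?thesis
    unfolding fourier_def deriv_fun_def autocorrelation_def expect_def pointwise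
    by (simp add: sum_distrib_left)
qed

lemma expect_fourier_deriv_fun_matvec_sq:
  assumes "\<forall>i<n. \<forall>j<n. B i j = B j i" and "\<forall>i<n. \<not> B i i"
  shows "expect n (\<lambda>y. (fourier n (deriv_fun f y) (matvec n B y))^2)
       = (\<Sum>\<alpha>\<in>cube n. (fourier n (\<lambda>x. f x * quad_phase n B x) \<alpha>)^4)"
proof -
  let ?h = "\<lambda>x. f x * quad_phase n B x"
  have "expect n (\<lambda>y. (fourier n (deriv_fun f y) (matvec n B y))^2)
      = expect n (\<lambda>y. (autocorrelation n ?h y)^2)"
    by (simp add: fourier_deriv_fun_matvec[OF assms] power_mult_distrib quad_phase_square)
  also have "\<dots> = (\<Sum>\<alpha>\<in>cube n. (fourier n (autocorrelation n ?h) \<alpha>)^2)"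
    by (rule fourier_parseval[symmetric])
  also have "\<dots> = (\<Sum>\<alpha>\<in>cube n. (fourier n ?h \<alpha>)^4)"
    by (intro sum.cong) (simp_all add: fourier_autocorrelation)
  finally show ?thesis .
qed

lemma sum_fourier_sq_sign_valued:
  assumes "\<forall>x\<in>cube n. h x = 1 \<or> h x = -1"
  shows "(\<Sum>\<alpha>\<in>cube n. (fourier n h \<alpha>)^2) = 1"
proof -
  have "(\<Sum>x\<in>cube n. (h x)^2) = (\<Sum>x\<in>cube n. 1)"
    using assms by (intro sum.cong) auto
  then show ?thesis
    by (simp add: fourier_parseval expect_def card_cube)
qed

lemma ex_large_fourier_coeff:
  assumes sign_valued: "\<forall>x\<in>cube n. h x = 1 \<or> h x = -1"
    and fourth_moment: "\<epsilon> \<le> (\<Sum>\<alpha>\<in>cube n. (fourier n h \<alpha>)^4)"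
  shows "\<exists>\<alpha>\<in>cube n. \<epsilon> \<le> \<bar>fourier n h \<alpha>\<bar>"
proof -
  let ?w = "\<lambda>\<alpha>. (fourier n h \<alpha>)^2"
  define M where "M = Max (?w ` cube n)"
  have "{} \<in> cube n" by (simp add: cube_def)
  then obtain \<alpha> where \<alpha>: "\<alpha> \<in> cube n" "?w \<alpha> = M"
    using Max_in[of "?w ` cube n"] finite_cube unfolding M_def by fastforce
  have le_M: "?w \<beta> \<le> M" if "\<beta> \<in> cube n" for \<beta>
    unfolding M_def using finite_cube that by (intro Max_ge) auto
  have "\<epsilon> \<le> (\<Sum>\<beta>\<in>cube n. ?w \<beta> * ?w \<beta>)"
    using fourth_moment by (simp flip: power_add)
  also have "\<dots> \<le> (\<Sum>\<beta>\<in>cube n. M * ?w \<beta>)"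
    by (intro sum_mono mult_right_mono le_M) auto
  also have "\<dots> = M"
    by (simp add: sum_distrib_left[symmetric] sum_fourier_sq_sign_valued[OF sign_valued])
  finally have "\<epsilon> \<le> ?w \<alpha>" using \<alpha>(2) by simp
  have "?w \<alpha> \<le> 1"
    using member_le_sum[OF \<alpha>(1), of ?w] finite_cube sum_fourier_sq_sign_valued[OF sign_valued] by simp
  then have "\<bar>fourier n h \<alpha>\<bar> * \<bar>fourier n h \<alpha>\<bar> \<le> \<bar>fourier n h \<alpha>\<bar>"
    by (intro mult_left_le) (simp_all add: abs_square_le_1)
  then have "?w \<alpha> \<le> \<bar>fourier n h \<alpha>\<bar>" by (simp add: power2_eq_square)
  with \<open>\<epsilon> \<le> ?w \<alpha>\<close> \<alpha>(1) show ?thesis by force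
qed

lemma dist_cube_sign_valued:
  assumes "\<forall>x\<in>cube n. f x = 1 \<or> f x = -1" and "\<forall>x\<in>cube n. g x = 1 \<or> g x = -1"
  shows "dist_cube n f g = (1 - expect n (\<lambda>x. f x * g x)) / 2"
proof -
  have "(\<Sum>x\<in>cube n. f x * g x) = (\<Sum>x\<in>cube n. 1 - 2 * of_bool (f x \<noteq> g x))"
  proof (intro sum.cong refl)
    fix x assume "x \<in> cube n"
    then have "f x = 1 \<or> f x = -1" "g x = 1 \<or> g x = -1" using assms by auto
    then show "f x * g x = 1 - 2 * of_bool (f x \<noteq> g x)" by auto
  qed
  also have "\<dots> = real (card (cube n)) - 2 * (\<Sum>x\<in>cube n. of_bool (f x \<noteq> g x))"
    by (simp add: sum_subtractf sum_distrib_left)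
  also have "(\<Sum>x\<in>cube n. of_bool (f x \<noteq> g x)) = real (card {x \<in> cube n. f x \<noteq> g x})"
    by (simp add: finite_cube Int_def)
  finally show ?thesis
    by (simp add: dist_cube_def expect_def card_cube field_simps)
qed

lemma quadratic_poly_fun_chr_quad_phase:
  assumes "\<alpha> \<in> cube n"
  shows "quadratic_poly_fun n (\<lambda>x. bool_sign c * chr \<alpha> x * quad_phase n B x)"
  unfolding quadratic_poly_fun_def
proof (intro exI ballI)
  fix x
  have support: "\<alpha> \<inter> x = {i \<in> x. i < n \<and> i \<in> \<alpha>}" using cube_subset[OF assms] by auto
  have "bool_sign c * chr \<alpha> x * quad_phase n B x = bool_sign (quad_poly_eval n c (\<lambda>i. i \<in> \<alpha>) B x)"
    unfolding quad_poly_eval_def bool_sign_xor bool_sign_odd power_add chr_def quad_phase_def support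
    by (simp add: mult_ac)
  then show "bool_sign c * chr \<alpha> x * quad_phase n B x
      = (if quad_poly_eval n c (\<lambda>i. i \<in> \<alpha>) B x then -1 else 1)"
    by (simp add: bool_sign_def)
qed

lemma ex_quadratic_poly_fun_dist_cube_fourier:
  assumes f_sign: "\<forall>x\<in>cube n. f x = 1 \<or> f x = -1" and "\<alpha> \<in> cube n"
  shows "\<exists>g. quadratic_poly_fun n g
           \<and> dist_cube n f g = (1 - \<bar>fourier n (\<lambda>x. f x * quad_phase n B x) \<alpha>\<bar>) / 2"
proof -
  let ?c = "fourier n (\<lambda>x. f x * quad_phase n B x) \<alpha>"
  define s where "s = bool_sign (?c < 0)"
  define g where "g x = s * chr \<alpha> x * quad_phase n B x" for x
  have "quadratic_poly_fun n g"
    unfolding g_def s_def by (rule quadratic_poly_fun_chr_quad_phase[OF \<open>\<alpha> \<in> cube n\<close>])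
  moreover have g_sign: "\<forall>x\<in>cube n. g x = 1 \<or> g x = -1"
    by (auto simp: g_def s_def bool_sign_def chr_def quad_phase_def minus_one_power_iff)
  have "expect n (\<lambda>x. f x * g x) = s * ?c"
    by (simp add: g_def fourier_def expect_def sum_distrib_left sum_distrib_right mult_ac)
  then have "expect n (\<lambda>x. f x * g x) = \<bar>?c\<bar>"
    by (simp add: s_def bool_sign_def)
  then have "dist_cube n f g = (1 - \<bar>?c\<bar>) / 2"
    by (simp add: dist_cube_sign_valued[OF f_sign g_sign])
  ultimately show ?thesis by blast
qed

lemma ex_quadratic_poly_fun_close:
  assumes f_sign: "\<forall>x\<in>cube n. f x = 1 \<or> f x = -1"
    and sym: "\<forall>i<n. \<forall>j<n. B i j = B j i" and diag: "\<forall>i<n. \<not> B i i"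
    and hyp: "\<epsilon> \<le> expect n (\<lambda>y. (fourier n (deriv_fun f y) (matvec n B y))\<^sup>2)"
  shows "\<exists>g. quadratic_poly_fun n g \<and> dist_cube n f g \<le> 1/2 - \<epsilon>/2"
proof -
  let ?h = "\<lambda>x. f x * quad_phase n B x"
  have h_sign: "\<forall>x\<in>cube n. ?h x = 1 \<or> ?h x = -1"
    using f_sign by (auto simp: quad_phase_def minus_one_power_iff)
  obtain \<alpha> where "\<alpha> \<in> cube n" and "\<epsilon> \<le> \<bar>fourier n ?h \<alpha>\<bar>"
    using ex_large_fourier_coeff[OF h_sign] hyp
    unfolding expect_fourier_deriv_fun_matvec_sq[OF sym diag] by blast
  moreover obtain g where "quadratic_poly_fun n g"
    and "dist_cube n f g = (1 - \<bar>fourier n ?h \<alpha>\<bar>) / 2"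
    using ex_quadratic_poly_fun_dist_cube_fourier[OF f_sign \<open>\<alpha> \<in> cube n\<close>] by blast
  ultimately show ?thesis by (intro exI[of _ g]) auto
qed

theorem corollary6p4:
  shows "\<forall>\<epsilon>::real. \<epsilon> > 0 \<longrightarrow> (\<exists>\<epsilon>'::real. \<epsilon>' > 0 \<and>
     (\<forall>(n::nat) (f :: nat set \<Rightarrow> real) (B :: nat \<Rightarrow> nat \<Rightarrow> bool).
        (\<forall>x\<in>cube n. f x = 1 \<or> f x = -1) \<longrightarrow>
        (\<forall>i<n. \<forall>j<n. B i j = B j i) \<longrightarrow>
        (\<forall>i<n. \<not> B i i) \<longrightarrow>
        expect n (\<lambda>y. (fourier n (deriv_fun f y) (matvec n B y))\<^sup>2) \<ge> \<epsilon> \<longrightarrow>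
        (\<exists>g. quadratic_poly_fun n g \<and> dist_cube n f g \<le> 1/2 - \<epsilon>')))"
  using ex_quadratic_poly_fun_close half_gt_zero by blast

end
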